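(* Let $n_1,\dots,n_m$ be positive integers, $n=n_1+\cdots+n_m$, let $\tau$ be a smooth $k$-representation of $M'=M'_{n_1,\dots,n_m}$ on a space $E$, and let $\theta$ be a non-degenerate character of $U=U_{n_1}\times\cdots\times U_{n_m}$. Then $\tau^{(n)}_{\theta}\neq0$ if and only if $\mathrm{Hom}_{k[U]}(\tau,\theta)\neq0$; in particular, this is equivalent to the $(U,\theta)$-coinvariants $E/\langle\tau(u)a-\theta(u)a: u\in U,a\in E\rangle$ of $\tau$ being non-zero.
   Context: $F$ is a non-archimedean locally compact field of residual characteristic $p$, $k$ an algebraically closed field of characteristic $\ell\neq p$. $M_{n_1,\dots,n_m}=\mathrm{GL}_{n_1}(F)\times\cdots\times\mathrm{GL}_{n_m}(F)$ embedded block-diagonally in $\mathrm{GL}_n(F)$, and $M'_{n_1,\dots,n_m}=M_{n_1,\dots,n_m}\cap\mathrm{SL}_n(F)$. $U_{n_i}$ is the upper unitriangular subgroup of $\mathrm{GL}_{n_i}(F)$, and $\theta:U\to k^\times$ is a smooth character trivial on $[U,U]$ and nontrivial on each simple root subgroup. Derivative: for $1\le s\le m$ and $2\le j\le n_s$ let $N_{s,j}\subset U$ be the subgroup of elements equal to the identity in all blocks except block $s$, where the entry is an upper unitriangular matrix whose only possibly nonzero off-diagonal entries are in column $j$, rows $1,\dots,j-1$. List these groups as $N_{m,n_m},N_{m,n_m-1},\dots,N_{m,2},N_{m-1,n_{m-1}},\dots,N_{1,2}$. Put $E_0=E$ and let $E_t$ be the quotient of $E_{t-1}$ by the span of $g a-\theta(g)a$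 for $g$ in the $t$-th group of the list and $a\in E_{t-1}$ (each $E_{t-1}$ is naturally acted on by the later groups of the list). The last quotient, a $k$-vector space, is the $n$-th derivative $\tau^{(n)}_\theta$ (denoted $\tau^{(n_1+\cdots+n_m)}_{\theta,m}$ in the paper). *)

theory Defs
  imports "Jordan_Normal_Form.Determinant" "HOL-Computational_Algebra.Polynomial"
begin

definition nonarch_local_field :: "('f::field \<Rightarrow> real) \<Rightarrow> nat \<Rightarrow> bool" where
  "nonarch_local_field absv p \<longleftrightarrow>
     (\<forall>x. absv x \<ge> 0) \<and> (\<forall>x. absv x = 0 \<longleftrightarrow> x = 0) \<and>
     (\<forall>x y. absv (x * y) = absv x * absv y) \<and>
     (\<forall>x y. absv (x + y) \<le> max (absv x) (absv y)) \<and>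
     (\<exists>x. absv x \<noteq> 0 \<and> absv x \<noteq> 1) \<and>
     \<comment> \<open>local compactness: the closed unit ball is sequentially compact\<close>
     (\<forall>X :: nat \<Rightarrow> 'f. (\<forall>i. absv (X i) \<le> 1) \<longrightarrow>
        (\<exists>r L. strict_mono r \<and> (\<lambda>i. absv (X (r i) - L)) \<longlonglongrightarrow> 0)) \<and>
     \<comment> \<open>residual characteristic p\<close>
     prime p \<and> absv (of_nat p) < 1"

definition alg_closed_field :: "'k::field itself \<Rightarrow> bool" where
  "alg_closed_field _ \<longleftrightarrow> (\<forall>q :: 'k poly. degree q > 0 \<longrightarrow> (\<exists>x. poly q x = 0))"

text \<open>Blocks are numbered 0..m-1; block s occupies the indices
  offs ns s ..< offs ns s + ns!s (0-based).\<close>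

definition offs :: "nat list \<Rightarrow> nat \<Rightarrow> nat" where
  "offs ns s = sum_list (take s ns)"

definition blk :: "nat list \<Rightarrow> nat \<Rightarrow> nat" where
  "blk ns i = (LEAST s. i < offs ns (Suc s))"

definition block_diag :: "nat list \<Rightarrow> 'f::field mat \<Rightarrow> bool" where
  "block_diag ns A \<longleftrightarrow> A \<in> carrier_mat (sum_list ns) (sum_list ns) \<and>
     (\<forall>i < sum_list ns. \<forall>j < sum_list ns. blk ns i \<noteq> blk ns j \<longrightarrow> A $$ (i, j) = 0)"

definition Mprime :: "nat list \<Rightarrow> 'f::field mat set" where
  "Mprime ns = {A. block_diag ns A \<and> det A = 1}"

definition Ugrp :: "nat list \<Rightarrow> 'f::field mat set" where
  "Ugrp ns = {A. block_diag ns A \<and>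
     (\<forall>i < sum_list ns. A $$ (i, i) = 1) \<and>
     (\<forall>i < sum_list ns. \<forall>j < i. A $$ (i, j) = 0)}"

definition elem_mat :: "nat \<Rightarrow> nat \<Rightarrow> nat \<Rightarrow> 'f::field \<Rightarrow> 'f mat" where
  "elem_mat n a b x = mat n n (\<lambda>(i, j). if i = j then 1 else if i = a \<and> j = b then x else 0)"

text \<open>N_{s,j} (paper's 1-based j with 2 \<le> j \<le> n_s) corresponds here to 0-based block s
  and 0-based column c = j - 1 with 1 \<le> c < n_s: the matrices equal to the identity
  except possibly in column offs s + c, rows offs s ..< offs s + c.\<close>
definition Ngrp :: "nat list \<Rightarrow> nat \<Rightarrow> nat \<Rightarrow> 'f::field mat set" where
  "Ngrp ns s c = {A. A \<in> carrier_mat (sum_list ns) (sum_list ns) \<and>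
     (\<forall>a < sum_list ns. \<forall>b < sum_list ns.
        A $$ (a, b) \<noteq> (1\<^sub>m (sum_list ns)) $$ (a, b) \<longrightarrow>
          (b = offs ns s + c \<and> offs ns s \<le> a \<and> a < offs ns s + c))}"

definition Nlist :: "nat list \<Rightarrow> 'f::field mat set list" where
  "Nlist ns = concat (map (\<lambda>s. map (\<lambda>c. Ngrp ns s c) (rev [1..<ns ! s])) (rev [0..<length ns]))"

definition near_one :: "('f::field \<Rightarrow> real) \<Rightarrow> nat \<Rightarrow> real \<Rightarrow> 'f mat \<Rightarrow> bool" where
  "near_one absv n r g \<longleftrightarrow> (\<forall>i < n. \<forall>j < n. absv (g $$ (i, j) - (1\<^sub>m n) $$ (i, j)) < r)"

definition smooth_rep ::
  "('f::field \<Rightarrow> real) \<Rightarrow> nat list \<Rightarrow> ('k::field \<Rightarrow> 'e::ab_group_add \<Rightarrow> 'e) \<Rightarrow> ('f mat \<Rightarrow> 'e \<Rightarrow> 'e) \<Rightarrow> bool" where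
  "smooth_rep absv ns smul rho \<longleftrightarrow>
     vector_space smul \<and>
     (\<forall>g \<in> Mprime ns. Vector_Spaces.linear smul smul (rho g)) \<and>
     rho (1\<^sub>m (sum_list ns)) = id \<and>
     (\<forall>g \<in> Mprime ns. \<forall>h \<in> Mprime ns. rho (g * h) = rho g \<circ> rho h) \<and>
     (\<forall>a. \<exists>r > 0. \<forall>g \<in> Mprime ns. near_one absv (sum_list ns) r g \<longrightarrow> rho g a = a)"

definition smooth_char_U :: "('f::field \<Rightarrow> real) \<Rightarrow> nat list \<Rightarrow> ('f mat \<Rightarrow> 'k::field) \<Rightarrow> bool" where
  "smooth_char_U absv ns \<theta> \<longleftrightarrow>
     (\<forall>u \<in> Ugrp ns. \<theta> u \<noteq> 0) \<and>
     (\<forall>u \<in> Ugrp ns. \<forall>v \<in> Ugrp ns. \<theta> (u * v) = \<theta> u * \<theta> v) \<and>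
     (\<exists>r > 0. \<forall>u \<in> Ugrp ns. near_one absv (sum_list ns) r u \<longrightarrow> \<theta> u = 1)"

definition nondegenerate :: "nat list \<Rightarrow> ('f::field mat \<Rightarrow> 'k::field) \<Rightarrow> bool" where
  "nondegenerate ns \<theta> \<longleftrightarrow>
     (\<forall>s < length ns. \<forall>i. i + 1 < ns ! s \<longrightarrow>
        (\<exists>x. \<theta> (elem_mat (sum_list ns) (offs ns s + i) (offs ns s + i + 1) x) \<noteq> 1))"

text \<open>Iterated quotients: E_t = E / K_t, where K_t is the kernel of E \<rightarrow> E_t.  Since every element
  of E_{t-1} is the class of some a \<in> E and g acts on classes by g[a] = [g a], the kernel of
  E \<rightarrow> E_t is K_{t-1} + span{g a - \<theta>(g) a : g \<in> t-th group, a \<in> E}.\<close>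
fun deriv_kernel :: "('k::field \<Rightarrow> 'e::ab_group_add \<Rightarrow> 'e) \<Rightarrow> ('f mat \<Rightarrow> 'e \<Rightarrow> 'e) \<Rightarrow> ('f mat \<Rightarrow> 'k)
     \<Rightarrow> 'e set \<Rightarrow> 'f mat set list \<Rightarrow> 'e set" where
  "deriv_kernel smul rho \<theta> K [] = K"
| "deriv_kernel smul rho \<theta> K (G # Gs) =
     deriv_kernel smul rho \<theta> (module.span smul (K \<union> {rho g a - smul (\<theta> g) a | g a. g \<in> G})) Gs"

definition derivative_nonzero :: "nat list \<Rightarrow> ('k::field \<Rightarrow> 'e::ab_group_add \<Rightarrow> 'e) \<Rightarrow> ('f::field mat \<Rightarrow> 'e \<Rightarrow> 'e)
     \<Rightarrow> ('f mat \<Rightarrow> 'k) \<Rightarrow> bool" where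
  "derivative_nonzero ns smul rho \<theta> \<longleftrightarrow> deriv_kernel smul rho \<theta> {0} (Nlist ns) \<noteq> UNIV"

definition hom_U_nonzero :: "nat list \<Rightarrow> ('k::field \<Rightarrow> 'e::ab_group_add \<Rightarrow> 'e) \<Rightarrow> ('f::field mat \<Rightarrow> 'e \<Rightarrow> 'e)
     \<Rightarrow> ('f mat \<Rightarrow> 'k) \<Rightarrow> bool" where
  "hom_U_nonzero ns smul rho \<theta> \<longleftrightarrow>
     (\<exists>phi. Vector_Spaces.linear smul ((*) :: 'k \<Rightarrow> 'k \<Rightarrow> 'k) phi \<and>
          (\<forall>u \<in> Ugrp ns. \<forall>a. phi (rho u a) = \<theta> u * phi a) \<and> phi \<noteq> (\<lambda>_. 0))"

definition coinvariants_nonzero :: "nat list \<Rightarrow> ('k::field \<Rightarrow> 'e::ab_group_add \<Rightarrow> 'e) \<Rightarrow> ('f::field mat \<Rightarrow> 'e \<Rightarrow> 'e)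
     \<Rightarrow> ('f mat \<Rightarrow> 'k) \<Rightarrow> bool" where
  "coinvariants_nonzero ns smul rho \<theta> \<longleftrightarrow>
     module.span smul {rho u a - smul (\<theta> u) a | u a. u \<in> Ugrp ns} \<noteq> UNIV"

end

theory Submission
  imports Defs
begin

(* The kernel of E -> tau^(n) is the span of the vectors rho g a - theta(g) a with g in one of
   the groups N_{s,j}, since each quotient step only adds such vectors to the kernel.  Splitting
   off its columns from the right writes every u in U as a product of elements of the N_{s,j},
   and the identity
     rho(gh) a - theta(gh) a = (rho g b - theta(g) b) + theta(g) (rho h a - theta(h) a),  b = rho h a,
   shows that this span is the span of all rho u a - theta(u) a with u in U.  So tau^(n) is the
   space of (U, theta)-coinvariants, and a nonzero linear functional vanishes on a subspace exactly
   when the subspace is proper. *)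

definition twisted_diffs ::
  "('k \<Rightarrow> 'e::ab_group_add \<Rightarrow> 'e) \<Rightarrow> ('g \<Rightarrow> 'e \<Rightarrow> 'e) \<Rightarrow> ('g \<Rightarrow> 'k) \<Rightarrow> 'g set \<Rightarrow> 'e set" where
  "twisted_diffs smul rho \<theta> X = {rho g a - smul (\<theta> g) a | g a. g \<in> X}"

lemma ball_twisted_diffs_iff:
  "(\<forall>x\<in>twisted_diffs smul rho \<theta> X. P x) \<longleftrightarrow> (\<forall>g\<in>X. \<forall>a. P (rho g a - smul (\<theta> g) a))"
  unfolding twisted_diffs_def by blast

lemma twisted_diffs_mono: "X \<subseteq> Y \<Longrightarrow> twisted_diffs smul rho \<theta> X \<subseteq> twisted_diffs smul rho \<theta> Y"
  unfolding twisted_diffs_def by blast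

lemma vector_space_field_mult: "vector_space ((*) :: 'k::field \<Rightarrow> 'k \<Rightarrow> 'k)"
  by unfold_locales (simp_all add: algebra_simps)

context vector_space
begin

lemma twisted_diff_mult:
  assumes "rho (g * h) = rho g \<circ> rho h" and "\<theta> (g * h) = \<theta> g * \<theta> h"
  shows "rho (g * h) a - \<theta> (g * h) *s a
    = (rho g (rho h a) - \<theta> g *s rho h a) + \<theta> g *s (rho h a - \<theta> h *s a)"
  using assms by (simp add: scale_right_diff_distrib)

lemma twisted_diffs_mult_subset_span:
  assumes "rho (g * h) = rho g \<circ> rho h" and "\<theta> (g * h) = \<theta> g * \<theta> h"
    and "twisted_diffs scale rho \<theta> {g} \<subseteq> span S" and "twisted_diffs scale rho \<theta> {h} \<subseteq> span S"
  shows "twisted_diffs scale rho \<theta> {g * h} \<subseteq> span S"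
proof
  fix x assume "x \<in> twisted_diffs scale rho \<theta> {g * h}"
  then obtain a where x: "x = rho (g * h) a - \<theta> (g * h) *s a"
    unfolding twisted_diffs_def by blast
  have "rho g (rho h a) - \<theta> g *s rho h a \<in> span S" "rho h a - \<theta> h *s a \<in> span S"
    using assms(3,4) unfolding twisted_diffs_def by blast+
  then show "x \<in> span S"
    unfolding x twisted_diff_mult[OF assms(1,2)] by (intro span_add span_scale)
qed

lemma twisted_diffs_one:
  assumes "rho e = id" and "\<theta> e = 1"
  shows "twisted_diffs scale rho \<theta> {e} = {0}"
  using assms unfolding twisted_diffs_def by auto

lemma span_Un_span_left: "span (span X \<union> Y) = span (X \<union> Y)"
proof
  show "span (span X \<union> Y) \<subseteq> span (X \<union> Y)"
    by (intro span_minimal subspace_span) (use span_mono[of X "X \<union> Y"] span_superset[of "X \<union> Y"] in auto)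
  show "span (X \<union> Y) \<subseteq> span (span X \<union> Y)"
    by (intro span_mono) (use span_superset[of X] in auto)
qed

lemma deriv_kernel_eq_span:
  assumes "span K = K"
  shows "deriv_kernel scale rho \<theta> K Gs = span (K \<union> twisted_diffs scale rho \<theta> (\<Union>(set Gs)))"
  using assms
proof (induction Gs arbitrary: K)
  case Nil
  then show ?case by (simp add: twisted_diffs_def) (metis span_eq_iff)
next
  case (Cons G Gs)
  let ?D = "twisted_diffs scale rho \<theta>"
  have "deriv_kernel scale rho \<theta> K (G # Gs) = span (span (K \<union> ?D G) \<union> ?D (\<Union>(set Gs)))"
    using Cons.IH[of "span (K \<union> ?D G)"] by (simp add: span_span twisted_diffs_def)
  also have "\<dots> = span (K \<union> ?D (\<Union>(set (G # Gs))))"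
    unfolding span_Un_span_left by (rule arg_cong[where f = span]) (auto simp: twisted_diffs_def)
  finally show ?case .
qed

lemma exists_nonzero_functional_vanishing_iff:
  "(\<exists>phi. Vector_Spaces.linear scale (*) phi \<and> (\<forall>x\<in>S. phi x = 0) \<and> phi \<noteq> (\<lambda>_. 0))
     \<longleftrightarrow> span S \<noteq> UNIV"
proof -
  interpret pair: vector_space_pair scale "(*) :: 'a \<Rightarrow> 'a \<Rightarrow> 'a"
    using vector_space_field_mult by (simp add: vector_space_pair_def vector_space_axioms)
  show ?thesis
  proof
    assume "\<exists>phi. Vector_Spaces.linear scale (*) phi \<and> (\<forall>x\<in>S. phi x = 0) \<and> phi \<noteq> (\<lambda>_. 0)"
    then obtain phi where lin: "Vector_Spaces.linear scale (*) phi"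
      and vanish: "\<forall>x\<in>S. phi x = 0" and nz: "phi \<noteq> (\<lambda>_. 0)" by blast
    show "span S \<noteq> UNIV"
      using pair.linear_eq_0_on_span[OF lin] vanish nz by fastforce
  next
    assume "span S \<noteq> UNIV"
    then obtain x where x: "x \<notin> span S" by auto
    obtain B where B: "B \<subseteq> span S" "independent B" "span S \<subseteq> span B"
      using maximal_independent_subset[of "span S"] by blast
    have xB: "x \<notin> span B"
      using x span_minimal[OF B(1) subspace_span] by blast
    have ind: "independent (insert x B)"
      by (rule independent_insertI[OF xB B(2)])
    define phi where "phi = pair.construct (insert x B) (\<lambda>y. if y = x then 1 else 0)"
    have lin: "Vector_Spaces.linear scale (*) phi"
      unfolding phi_def by (rule pair.linear_construct[OF ind])
    have phi_B: "phi w = (if w = x then 1 else 0)" if "w \<in> insert x B" for w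
      unfolding phi_def using pair.construct_basis[OF ind that] .
    have "phi w = 0" if "w \<in> B" for w
      using phi_B[of w] that xB span_superset[of B] by auto
    then have "phi y = 0" if "y \<in> span B" for y
      using pair.linear_eq_0_on_span[OF lin _ that] by blast
    then have "\<forall>y\<in>S. phi y = 0"
      using B(3) span_superset[of S] by blast
    moreover have "phi \<noteq> (\<lambda>_. 0)"
      using phi_B[of x] by auto
    ultimately show "\<exists>phi. Vector_Spaces.linear scale (*) phi \<and> (\<forall>x\<in>S. phi x = 0) \<and> phi \<noteq> (\<lambda>_. 0)"
      using lin by blast
  qed
qed

end

lemma offs_Suc: "s < length ns \<Longrightarrow> offs ns (Suc s) = offs ns s + ns ! s"
  by (simp add: offs_def take_Suc_conv_app_nth)

lemma offs_mono: "s \<le> t \<Longrightarrow> offs ns s \<le> offs ns t"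
  by (metis le_add_diff_inverse offs_def sum_list_append take_add le_add1)

lemma blk_eqI:
  assumes "s < length ns" "offs ns s \<le> i" "i < offs ns (Suc s)"
  shows "blk ns i = s"
  unfolding blk_def
proof (rule Least_equality)
  fix t assume "i < offs ns (Suc t)"
  then show "s \<le> t"
    using assms(2) offs_mono[of "Suc t" s ns] by (cases "s \<le> t") auto
qed fact

lemma blk_bounds:
  assumes "i < sum_list ns"
  shows "blk ns i < length ns" "offs ns (blk ns i) \<le> i" "i < offs ns (blk ns i) + ns ! blk ns i"
proof -
  have last: "i < offs ns (Suc (length ns - 1))"
    using assms by (cases ns) (auto simp: offs_def)
  have below: "i < offs ns (Suc (blk ns i))"
    unfolding blk_def by (rule LeastI[of "\<lambda>s. i < offs ns (Suc s)", OF last])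
  have "blk ns i \<le> length ns - 1"
    unfolding blk_def by (rule Least_le[of "\<lambda>s. i < offs ns (Suc s)", OF last])
  then show len: "blk ns i < length ns"
    using assms by (cases ns) auto
  show "offs ns (blk ns i) \<le> i"
  proof (cases "blk ns i")
    case (Suc t)
    then have "\<not> i < offs ns (Suc t)"
      unfolding blk_def by (metis lessI not_less_Least)
    then show ?thesis using Suc by simp
  qed (simp add: offs_def)
  show "i < offs ns (blk ns i) + ns ! blk ns i"
    using below offs_Suc[OF len] by simp
qed

lemma set_Nlist_iff:
  "G \<in> set (Nlist ns) \<longleftrightarrow> (\<exists>s c. s < length ns \<and> 1 \<le> c \<and> c < ns ! s \<and> G = Ngrp ns s c)"
  unfolding Nlist_def by fastforce

lemma one_mem_Ugrp: "1\<^sub>m (sum_list ns) \<in> Ugrp ns"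
  unfolding Ugrp_def block_diag_def by auto

lemma Ugrp_subset_Mprime: "Ugrp ns \<subseteq> Mprime ns"
proof
  fix A :: "'a mat" assume A: "A \<in> Ugrp ns"
  let ?n = "sum_list ns"
  have carrier: "A \<in> carrier_mat ?n ?n"
    using A unfolding Ugrp_def block_diag_def by auto
  have "upper_triangular A"
    using A carrier unfolding Ugrp_def upper_triangular_def by auto
  moreover have "diag_mat A = replicate ?n 1"
    using A carrier by (intro nth_equalityI) (auto simp: diag_mat_def Ugrp_def)
  ultimately have "det A = 1"
    using det_upper_triangular[OF _ carrier] by simp
  then show "A \<in> Mprime ns"
    using A unfolding Mprime_def Ugrp_def by simp
qed

lemma Ngrp_subset_Ugrp:
  assumes s: "s < length ns" and c: "1 \<le> c" "c < ns ! s"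
  shows "Ngrp ns s c \<subseteq> Ugrp ns"
proof
  fix A :: "'a mat" assume "A \<in> Ngrp ns s c"
  let ?n = "sum_list ns"
  have carrier: "A \<in> carrier_mat ?n ?n"
    and off_id: "\<And>a b. a < ?n \<Longrightarrow> b < ?n \<Longrightarrow> A $$ (a, b) \<noteq> 1\<^sub>m ?n $$ (a, b) \<Longrightarrow>
      b = offs ns s + c \<and> offs ns s \<le> a \<and> a < offs ns s + c"
    using \<open>A \<in> Ngrp ns s c\<close> unfolding Ngrp_def by auto
  have in_block: "blk ns a = s" if "offs ns s \<le> a" "a \<le> offs ns s + c" for a
    using blk_eqI[OF s] that c offs_Suc[OF s] by simp
  have "A $$ (a, b) = 1\<^sub>m ?n $$ (a, b)"
    if "a < ?n" "b < ?n" "blk ns a \<noteq> blk ns b \<or> a = b \<or> b < a" for a b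
    using off_id[OF that(1,2)] that(3) in_block by fastforce
  then show "A \<in> Ugrp ns"
    unfolding Ugrp_def block_diag_def using carrier by fastforce
qed

lemma UgrpD:
  assumes "u \<in> Ugrp ns"
  shows "u \<in> carrier_mat (sum_list ns) (sum_list ns)"
    and "\<And>a b. a < sum_list ns \<Longrightarrow> b < sum_list ns \<Longrightarrow> blk ns a \<noteq> blk ns b \<Longrightarrow> u $$ (a, b) = 0"
    and "\<And>i. i < sum_list ns \<Longrightarrow> u $$ (i, i) = 1"
    and "\<And>i j. i < sum_list ns \<Longrightarrow> j < i \<Longrightarrow> u $$ (i, j) = 0"
  using assms unfolding Ugrp_def block_diag_def by auto

definition id_cols_from :: "nat \<Rightarrow> nat \<Rightarrow> 'a::{zero,one} mat \<Rightarrow> bool" where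
  "id_cols_from n k u \<longleftrightarrow>
     (\<forall>l t. k \<le> l \<longrightarrow> l < n \<longrightarrow> t < n \<longrightarrow> u $$ (t, l) = 1\<^sub>m n $$ (t, l))"

definition col_part :: "nat \<Rightarrow> nat \<Rightarrow> 'a::{zero,one} mat \<Rightarrow> 'a mat" where
  "col_part n j u = mat n n (\<lambda>(a, b). if a = b then 1 else if b = j then u $$ (a, j) else 0)"

definition clear_col :: "nat \<Rightarrow> nat \<Rightarrow> 'a::{zero,one} mat \<Rightarrow> 'a mat" where
  "clear_col n j u = mat n n (\<lambda>(a, b). if b = j then 1\<^sub>m n $$ (a, b) else u $$ (a, b))"

lemma col_part_mult_clear_col:
  fixes u :: "'a::semiring_1 mat"
  assumes u: "u \<in> carrier_mat n n" and j: "j < n"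
    and row_j: "\<And>l. l < n \<Longrightarrow> u $$ (j, l) = 1\<^sub>m n $$ (j, l)"
  shows "col_part n j u * clear_col n j u = u"
proof (rule eq_matI)
  fix i l assume "i < dim_row u" "l < dim_col u"
  then have i: "i < n" and l: "l < n" using u by auto
  let ?c = "clear_col n j u"
  have "(col_part n j u * ?c) $$ (i, l)
      = (\<Sum>t<n. (if t = i then ?c $$ (i, l) else 0)
               + (if t = j \<and> i \<noteq> j then u $$ (i, j) * ?c $$ (j, l) else 0))"
    using i l by (auto simp: col_part_def clear_col_def scalar_prod_def atLeast0LessThan
        intro!: sum.cong)
  also have "\<dots> = ?c $$ (i, l) + (if i \<noteq> j then u $$ (i, j) * ?c $$ (j, l) else 0)"
    using i j by (simp add: sum.distrib)
  also have "\<dots> = u $$ (i, l)"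
    using i l j row_j[OF l] by (auto simp: clear_col_def)
  finally show "(col_part n j u * ?c) $$ (i, l) = u $$ (i, l)" .
qed (use u in \<open>auto simp: col_part_def clear_col_def\<close>)

lemma id_cols_from_0_eq_one:
  "u \<in> carrier_mat n n \<Longrightarrow> id_cols_from n 0 u \<Longrightarrow> u = 1\<^sub>m n"
  unfolding id_cols_from_def by (intro eq_matI) auto

lemma id_cols_from_clear_col:
  "id_cols_from n (Suc j) u \<Longrightarrow> id_cols_from n j (clear_col n j u)"
  unfolding id_cols_from_def clear_col_def by (auto simp: le_Suc_eq)

lemma clear_col_mem_Ugrp: "u \<in> Ugrp ns \<Longrightarrow> clear_col (sum_list ns) j u \<in> Ugrp ns"
  unfolding Ugrp_def block_diag_def clear_col_def by auto

lemma Ugrp_row_eq_one_mat: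
  assumes "u \<in> Ugrp ns" and "id_cols_from (sum_list ns) (Suc j) u"
    and "j < sum_list ns" "l < sum_list ns"
  shows "u $$ (j, l) = 1\<^sub>m (sum_list ns) $$ (j, l)"
  using assms UgrpD[OF assms(1)] unfolding id_cols_from_def
  by (cases l j rule: linorder_cases) auto

lemma col_part_eq_one_or_mem_Nlist:
  assumes u: "u \<in> Ugrp ns" and j: "j < sum_list ns"
  shows "col_part (sum_list ns) j u = 1\<^sub>m (sum_list ns)
    \<or> (\<exists>G \<in> set (Nlist ns). col_part (sum_list ns) j u \<in> G)"
proof (cases "\<exists>i<j. u $$ (i, j) \<noteq> 0")
  case False
  then show ?thesis
    using UgrpD(4)[OF u]
    by (intro disjI1 eq_matI) (auto simp: col_part_def, metis linorder_neqE_nat)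
next
  case True
  let ?n = "sum_list ns" and ?g = "col_part (sum_list ns) j u"
  define s where "s = blk ns j"
  define c where "c = j - offs ns s"
  obtain i where "i < j" "u $$ (i, j) \<noteq> 0"
    using True by blast
  then have "blk ns i = s"
    using UgrpD(2)[OF u, of i j] j s_def by auto
  then have "offs ns s < j"
    using blk_bounds(2)[of i ns] \<open>i < j\<close> j by simp
  then have s: "s < length ns" and c: "1 \<le> c" "c < ns ! s" and j_eq: "j = offs ns s + c"
    using blk_bounds[OF j] unfolding s_def c_def by auto
  have "?g \<in> Ngrp ns s c"
    unfolding Ngrp_def
  proof (intro CollectI conjI allI impI)
    fix a b assume ab: "a < ?n" "b < ?n" "?g $$ (a, b) \<noteq> 1\<^sub>m ?n $$ (a, b)"
    then have "b = j" "a \<noteq> j" "u $$ (a, j) \<noteq> 0"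
      by (auto simp: col_part_def split: if_splits)
    moreover from this have "a < j"
      using UgrpD(4)[OF u ab(1)] by (cases a j rule: linorder_cases) auto
    moreover have "blk ns a = s"
      using UgrpD(2)[OF u ab(1) j] calculation s_def by auto
    ultimately show "b = offs ns s + c" "offs ns s \<le> a" "a < offs ns s + c"
      using blk_bounds(2)[OF ab(1)] j_eq by auto
  qed (simp add: col_part_def)
  moreover have "Ngrp ns s c \<in> set (Nlist ns)"
    using set_Nlist_iff s c by blast
  ultimately show ?thesis by blast
qed

lemma Union_Nlist_subset_Ugrp: "\<Union>(set (Nlist ns)) \<subseteq> Ugrp ns"
  using Ngrp_subset_Ugrp by (fastforce simp: set_Nlist_iff)

context vector_space
begin

lemma twisted_diffs_Ugrp_subset_span_Nlist:
  assumes rho_mult: "\<forall>g\<in>Ugrp ns. \<forall>h\<in>Ugrp ns. rho (g * h) = rho g \<circ> rho h"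
    and theta_mult: "\<forall>g\<in>Ugrp ns. \<forall>h\<in>Ugrp ns. \<theta> (g * h) = \<theta> g * \<theta> h"
    and rho_one: "rho (1\<^sub>m (sum_list ns)) = id" and theta_one: "\<theta> (1\<^sub>m (sum_list ns)) = 1"
  shows "twisted_diffs scale rho \<theta> (Ugrp ns) \<subseteq> span (twisted_diffs scale rho \<theta> (\<Union>(set (Nlist ns))))"
proof -
  let ?n = "sum_list ns" and ?D = "twisted_diffs scale rho \<theta>"
  let ?S = "?D (\<Union>(set (Nlist ns)))"
  let ?N = "insert (1\<^sub>m ?n) (\<Union>(set (Nlist ns)))"
  have N_subset: "?N \<subseteq> Ugrp ns"
    using one_mem_Ugrp Union_Nlist_subset_Ugrp by blast
  have "?D ?N = ?D {1\<^sub>m ?n} \<union> ?S"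
    unfolding twisted_diffs_def by blast
  then have N_span: "?D ?N \<subseteq> span ?S"
    using twisted_diffs_one[where rho = rho and \<theta> = \<theta>, OF rho_one theta_one] span_superset[of ?S]
    by (simp add: span_zero)
  have peel: "?D {u} \<subseteq> span ?S" if "u \<in> Ugrp ns" "id_cols_from ?n k u" "k \<le> ?n" for k u
    using that
  proof (induction k arbitrary: u)
    case 0
    then have "u \<in> ?N"
      using id_cols_from_0_eq_one UgrpD(1) by blast
    then show ?case
      using N_span twisted_diffs_mono[of "{u}" ?N] by blast
  next
    case (Suc k)
    let ?g = "col_part ?n k u" and ?u' = "clear_col ?n k u"
    have "?g * ?u' = u"
      using Suc.prems Ugrp_row_eq_one_mat[OF Suc.prems(1,2)]
      by (intro col_part_mult_clear_col UgrpD(1)) auto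
    moreover have "?u' \<in> Ugrp ns"
      using Suc.prems clear_col_mem_Ugrp by blast
    moreover from this have "?D {?u'} \<subseteq> span ?S"
      using Suc.prems id_cols_from_clear_col by (intro Suc.IH) auto
    moreover have "?g \<in> ?N"
      using col_part_eq_one_or_mem_Nlist[of u ns k] Suc.prems by auto
    then have "?g \<in> Ugrp ns" "?D {?g} \<subseteq> span ?S"
      using N_subset N_span twisted_diffs_mono[of "{?g}" ?N] by blast+
    ultimately show ?case
      using twisted_diffs_mult_subset_span[of rho ?g ?u' \<theta>] rho_mult theta_mult by metis
  qed
  have "?D {u} \<subseteq> span ?S" if "u \<in> Ugrp ns" for u
    using peel[OF that, of ?n] by (simp add: id_cols_from_def)
  then show ?thesis
    unfolding twisted_diffs_def by blast
qed

lemma span_twisted_diffs_Ugrp_eq_Nlist: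
  assumes "\<forall>g\<in>Ugrp ns. \<forall>h\<in>Ugrp ns. rho (g * h) = rho g \<circ> rho h"
    and "\<forall>g\<in>Ugrp ns. \<forall>h\<in>Ugrp ns. \<theta> (g * h) = \<theta> g * \<theta> h"
    and "rho (1\<^sub>m (sum_list ns)) = id" and "\<theta> (1\<^sub>m (sum_list ns)) = 1"
  shows "span (twisted_diffs scale rho \<theta> (Ugrp ns))
    = span (twisted_diffs scale rho \<theta> (\<Union>(set (Nlist ns))))"
  using span_minimal[OF twisted_diffs_Ugrp_subset_span_Nlist[OF assms] subspace_span]
    span_mono[OF twisted_diffs_mono[OF Union_Nlist_subset_Ugrp]]
  by (rule antisym)

end

lemma hom_U_nonzero_iff_coinvariants_nonzero:
  assumes "vector_space smul"
  shows "hom_U_nonzero ns smul rho \<theta> \<longleftrightarrow> coinvariants_nonzero ns smul rho \<theta>"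
proof -
  interpret vector_space smul by fact
  interpret pair: vector_space_pair smul "(*)"
    using vector_space_field_mult by (simp add: vector_space_pair_def vector_space_axioms)
  have equivariant_iff: "(\<forall>u\<in>Ugrp ns. \<forall>a. phi (rho u a) = \<theta> u * phi a)
      \<longleftrightarrow> (\<forall>x\<in>twisted_diffs smul rho \<theta> (Ugrp ns). phi x = 0)"
    if "Vector_Spaces.linear smul (*) phi" for phi
  proof -
    have "phi (rho u a - smul (\<theta> u) a) = phi (rho u a) - \<theta> u * phi a" for u a
      using pair.linear_diff[OF that] pair.linear_scale[OF that] by simp
    then show ?thesis
      by (simp add: ball_twisted_diffs_iff)
  qed
  show ?thesis
    unfolding hom_U_nonzero_def coinvariants_nonzero_def
      exists_nonzero_functional_vanishing_iff[symmetric]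
    using equivariant_iff by (auto simp: twisted_diffs_def)
qed

theorem proposition4p12:
  fixes absv :: "'f::field \<Rightarrow> real" and p :: nat
    and ns :: "nat list"
    and smul :: "'k::field \<Rightarrow> 'e::ab_group_add \<Rightarrow> 'e"
    and rho :: "'f mat \<Rightarrow> 'e \<Rightarrow> 'e"
    and \<theta> :: "'f mat \<Rightarrow> 'k"
  assumes F: "nonarch_local_field absv p"
    and k: "alg_closed_field TYPE('k)" and char: "CHAR('k) \<noteq> p"
    and ns: "ns \<noteq> []" "\<forall>n_i \<in> set ns. n_i > 0"
    and tau: "smooth_rep absv ns smul rho"
    and theta: "smooth_char_U absv ns \<theta>" "nondegenerate ns \<theta>"
  shows "(derivative_nonzero ns smul rho \<theta> \<longleftrightarrow> hom_U_nonzero ns smul rho \<theta>) \<and>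
         (hom_U_nonzero ns smul rho \<theta> \<longleftrightarrow> coinvariants_nonzero ns smul rho \<theta>)"
proof -
  let ?one = "1\<^sub>m (sum_list ns) :: 'f mat"
  have vs: "vector_space smul" and rho_one: "rho ?one = id"
    and rho_mult: "\<forall>g\<in>Ugrp ns. \<forall>h\<in>Ugrp ns. rho (g * h) = rho g \<circ> rho h"
    using tau Ugrp_subset_Mprime unfolding smooth_rep_def by blast+
  have theta_mult: "\<forall>g\<in>Ugrp ns. \<forall>h\<in>Ugrp ns. \<theta> (g * h) = \<theta> g * \<theta> h"
    and "\<theta> ?one \<noteq> 0"
    using theta(1) one_mem_Ugrp unfolding smooth_char_U_def by blast+
  then have theta_one: "\<theta> ?one = 1"
    using theta_mult one_mem_Ugrp[of ns] by (metis left_mult_one_mat one_carrier_mat mult_cancel_left1)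
  interpret vector_space smul by (fact vs)
  have "deriv_kernel smul rho \<theta> {0} (Nlist ns) = span (twisted_diffs smul rho \<theta> (Ugrp ns))"
    using deriv_kernel_eq_span[of "{0}"]
      span_twisted_diffs_Ugrp_eq_Nlist[OF rho_mult theta_mult rho_one theta_one] by simp
  then have "derivative_nonzero ns smul rho \<theta> \<longleftrightarrow> coinvariants_nonzero ns smul rho \<theta>"
    unfolding derivative_nonzero_def coinvariants_nonzero_def twisted_diffs_def by simp
  then show ?thesis
    using hom_U_nonzero_iff_coinvariants_nonzero[OF vs, of ns rho \<theta>] by blast
qed

end
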